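(* Under the standing setting, let $\mathcal{TV}_0(u)=|Du|_\nu(\Omega)+\int_{\partial\Omega}|T_\Omega u|\,d|D\chi_\Omega|_\nu$ for $u\in BV(\Omega,d,\nu)\cap L^2(\Omega,\nu)$ and $+\infty$ otherwise on $L^2(\Omega,\nu)$, and assume the Sobolev-type inequality: there is $C>0$ with $\|u\|_{L^2(\Omega,\nu)}\le C\,\mathcal{TV}_0(u)$ for all $u\in L^2(\Omega,\nu)$. Let $u_0\in L^2(\Omega,\nu)$ and let $u$ be the weak solution of the Dirichlet problem with boundary datum $f=0$ and initial datum $u_0$. Then $T_{ex}(u_0):=\inf\{T>0: u(t)=0\ \text{for all }t\ge T\}$ satisfies $$T_{ex}(u_0)\le\frac{\|u_0\|_{L^2(\Omega,\nu)}}{\lambda_1(\mathcal{TV}_0)},\qquad\lambda_1(\mathcal{TV}_0):=\inf\Big\{\frac{\mathcal{TV}_0(u)}{\|u\|_{L^2(\Omega,\nu)}}:u\in L^2(\Omega,\nu)\setminus\{0\}\Big\}>0.$$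
   Context: Standing setting: $(\mathbb{X},d)$ complete separable metric space, $\nu$ a doubling Radon measure, $\mathbb{X}$ supports a weak $(1,1)$-Poincaré inequality; $\mathcal{H}$ is the codimension-one Hausdorff measure; $\Omega$ is a bounded open regular domain (finite perimeter and $|D\chi_\Omega|_\nu(\mathbb{X})=\limsup_{t\to0}\nu(\Omega\setminus\Omega_t)/t$, $\Omega_t=\{x\in\Omega:\mathrm{dist}(x,\mathbb{X}\setminus\Omega)\ge t\}$) such that each of $U=\Omega$, $U=\mathbb{X}\setminus\overline\Omega$ supports a weak $(1,1)$-Poincaré inequality, satisfies $\nu(B(x,r)\cap U)\ge C\nu(B(x,r))$ for $\mathcal{H}$-a.e. $x\in\partial U$, $r\in(0,\mathrm{diam}\,U)$, and $C^{-1}\nu(B(x,r))/r\le\mathcal{H}(B(x,r)\cap\partial U)\le C\nu(B(x,r))/r$ for $x\in\partial U$, $r\in(0,\mathrm{diam}\,U)$. $|Du|_\nu$: total variation; $T_\Omega$: trace ($\lim_{r\to0}\frac{1}{\nu(\Omega\cap B(x,r))}\int_{\Omega\cap B(x,r)}|u-T_\Omega u(x)|d\nu=0$). The weak solution of the homogeneous Dirichlet problem with initial datum $u_0\in L^2(\Omega,\nu)$ is the unique strong solution $u$ of $u'(t)+\partial\mathcal{TV}_0(u(t))\ni0$, $u(0)=u_0$, where $\partial$ is the $L^2$-subdifferential. *)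

theory Defs
  imports "HOL-Analysis.Analysis"
begin

definition curve_len :: "(real \<Rightarrow> 'a::metric_space) \<Rightarrow> real \<Rightarrow> real \<Rightarrow> ennreal" where
  "curve_len \<gamma> s t =
     (SUP np \<in> {(n::nat, p::nat \<Rightarrow> real). p 0 = s \<and> p n = t \<and> (\<forall>i<n. p i \<le> p (Suc i))}.
        (\<Sum>i<fst np. ennreal (dist (\<gamma> (snd np i)) (\<gamma> (snd np (Suc i))))))"

definition arclength_param :: "(real \<Rightarrow> 'a::metric_space) \<Rightarrow> real \<Rightarrow> bool" where
  "arclength_param \<gamma> L \<longleftrightarrow> 0 \<le> L \<and>
     (\<forall>s t. 0 \<le> s \<and> s \<le> t \<and> t \<le> L \<longrightarrow> curve_len \<gamma> s t = ennreal (t - s))"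

definition upper_gradient_in :: "'a set \<Rightarrow> ('a::metric_space \<Rightarrow> real) \<Rightarrow> ('a \<Rightarrow> ennreal) \<Rightarrow> bool" where
  "upper_gradient_in U u g \<longleftrightarrow> g \<in> borel_measurable borel \<and>
     (\<forall>\<gamma> L. arclength_param \<gamma> L \<and> \<gamma> ` {0..L} \<subseteq> U \<longrightarrow>
        ennreal \<bar>u (\<gamma> 0) - u (\<gamma> L)\<bar> \<le> (\<integral>\<^sup>+ t. g (\<gamma> t) * indicator {0..L} t \<partial>lborel))"

text \<open>Weak (1,1)-Poincare inequality on the metric measure space (U, d, nu restricted to U),
  written in multiplied-out form (averages over balls B_U(x,r) = B(x,r) inter U).\<close>
definition poincare_11_on :: "'a::metric_space measure \<Rightarrow> 'a set \<Rightarrow> bool" where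
  "poincare_11_on \<nu> U \<longleftrightarrow> (\<exists>C>0. \<exists>lam\<ge>1. \<forall>x\<in>U. \<forall>r>0. \<forall>u g.
     u \<in> borel_measurable \<nu> \<and> (\<forall>y \<rho>. set_integrable \<nu> (ball y \<rho> \<inter> U) u) \<and> upper_gradient_in U u g \<longrightarrow>
     emeasure \<nu> (ball x (lam * r) \<inter> U) *
       (\<integral>\<^sup>+ y. ennreal \<bar>u y - (LINT z:ball x r \<inter> U|\<nu>. u z) / measure \<nu> (ball x r \<inter> U)\<bar>
               * indicator (ball x r \<inter> U) y \<partial>\<nu>)
     \<le> ennreal (C * r) * emeasure \<nu> (ball x r \<inter> U) *
       (\<integral>\<^sup>+ y. g y * indicator (ball x (lam * r) \<inter> U) y \<partial>\<nu>))"

text \<open>Locally finite (hence Radon on a Polish space) doubling Borel measure with positive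
  measure of balls.\<close>
definition doubling_radon :: "'a::metric_space measure \<Rightarrow> bool" where
  "doubling_radon \<nu> \<longleftrightarrow> sets \<nu> = sets borel \<and> space \<nu> = UNIV \<and>
     (\<forall>x r. r > 0 \<longrightarrow> 0 < emeasure \<nu> (ball x r) \<and> emeasure \<nu> (ball x r) < \<infinity>) \<and>
     (\<exists>C. \<forall>x r. r > 0 \<longrightarrow> emeasure \<nu> (ball x (2 * r)) \<le> ennreal C * emeasure \<nu> (ball x r))"

definition haus_R :: "'a::metric_space measure \<Rightarrow> real \<Rightarrow> 'a set \<Rightarrow> ennreal" where
  "haus_R \<nu> R A =
     (INF c \<in> {(I::nat set, x::nat \<Rightarrow> 'a, r::nat \<Rightarrow> real).
                 (\<forall>i\<in>I. 0 < r i \<and> r i \<le> R) \<and> A \<subseteq> (\<Union>i\<in>I. ball (x i) (r i))}.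
        (case c of (I, x, r) \<Rightarrow>
           (\<Sum>i. (if i \<in> I then emeasure \<nu> (ball (x i) (r i)) / ennreal (r i) else 0))))"

definition haus_codim1 :: "'a::metric_space measure \<Rightarrow> 'a set \<Rightarrow> ennreal" where
  "haus_codim1 \<nu> A = (SUP R \<in> {0<..}. haus_R \<nu> R A)"

definition ediam :: "'a::metric_space set \<Rightarrow> ereal" where
  "ediam U = (SUP x\<in>U. SUP y\<in>U. ereal (dist x y))"

definition lower_density_cond :: "'a::metric_space measure \<Rightarrow> 'a set \<Rightarrow> bool" where
  "lower_density_cond \<nu> U \<longleftrightarrow> (\<exists>C>0. \<exists>N. haus_codim1 \<nu> N = 0 \<and>
     (\<forall>x \<in> frontier U - N. \<forall>r. 0 < r \<and> ereal r < ediam U \<longrightarrow>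
        ennreal C * emeasure \<nu> (ball x r) \<le> emeasure \<nu> (ball x r \<inter> U)))"

definition codim1_ahlfors :: "'a::metric_space measure \<Rightarrow> 'a set \<Rightarrow> bool" where
  "codim1_ahlfors \<nu> U \<longleftrightarrow> (\<exists>C>0. \<forall>x \<in> frontier U. \<forall>r. 0 < r \<and> ereal r < ediam U \<longrightarrow>
     ennreal (1 / C) * emeasure \<nu> (ball x r) / ennreal r \<le> haus_codim1 \<nu> (ball x r \<inter> frontier U) \<and>
     haus_codim1 \<nu> (ball x r \<inter> frontier U) \<le> ennreal C * emeasure \<nu> (ball x r) / ennreal r)"

definition boundary_regular :: "'a::metric_space measure \<Rightarrow> 'a set \<Rightarrow> bool" where
  "boundary_regular \<nu> U \<longleftrightarrow> poincare_11_on \<nu> U \<and> lower_density_cond \<nu> U \<and> codim1_ahlfors \<nu> U"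

definition loc_lipschitz_on :: "'a set \<Rightarrow> ('a::metric_space \<Rightarrow> real) \<Rightarrow> bool" where
  "loc_lipschitz_on U f \<longleftrightarrow> (\<forall>x\<in>U. \<exists>r>0. \<exists>L. \<forall>y\<in>ball x r \<inter> U. \<forall>z\<in>ball x r \<inter> U.
      \<bar>f y - f z\<bar> \<le> L * dist y z)"

definition L1loc_conv :: "'a::metric_space measure \<Rightarrow> 'a set \<Rightarrow> (nat \<Rightarrow> 'a \<Rightarrow> real) \<Rightarrow> ('a \<Rightarrow> real) \<Rightarrow> bool" where
  "L1loc_conv \<nu> U us u \<longleftrightarrow> (\<forall>x\<in>U. \<exists>r>0.
      ((\<lambda>i. \<integral>\<^sup>+ y. ennreal \<bar>us i y - u y\<bar> * indicator (ball x r \<inter> U) y \<partial>\<nu>) \<longlonglongrightarrow> 0))"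

definition tv_open :: "'a::metric_space measure \<Rightarrow> ('a \<Rightarrow> real) \<Rightarrow> 'a set \<Rightarrow> ennreal" where
  "tv_open \<nu> u U =
     (INF ug \<in> {(us, gs). (\<forall>i. loc_lipschitz_on U (us i) \<and> upper_gradient_in U (us i) (gs i))
                           \<and> L1loc_conv \<nu> U us u}.
        liminf (\<lambda>i. \<integral>\<^sup>+ y. snd ug i y * indicator U y \<partial>\<nu>))"

definition tv_set :: "'a::metric_space measure \<Rightarrow> ('a \<Rightarrow> real) \<Rightarrow> 'a set \<Rightarrow> ennreal" where
  "tv_set \<nu> u A = (INF W \<in> {W. open W \<and> A \<subseteq> W}. tv_open \<nu> u W)"

definition perimeter_measure :: "'a::metric_space measure \<Rightarrow> 'a set \<Rightarrow> 'a measure" where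
  "perimeter_measure \<nu> E = measure_of UNIV (sets borel) (tv_set \<nu> (indicator E))"

text \<open>Trace T_Omega u(x) (0 where no trace value exists).\<close>
definition trace_pt :: "'a::metric_space measure \<Rightarrow> 'a set \<Rightarrow> ('a \<Rightarrow> real) \<Rightarrow> 'a \<Rightarrow> real" where
  "trace_pt \<nu> \<Omega> u x =
     (let P = (\<lambda>t::real. ((\<lambda>r. (\<integral>\<^sup>+ y. ennreal \<bar>u y - t\<bar> * indicator (\<Omega> \<inter> ball x r) y \<partial>\<nu>)
                               / emeasure \<nu> (\<Omega> \<inter> ball x r)) \<longlongrightarrow> 0) (at_right 0))
      in if \<exists>t. P t then (SOME t. P t) else 0)"

definition inner_set :: "'a::metric_space set \<Rightarrow> real \<Rightarrow> 'a set" where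
  "inner_set \<Omega> t = {x \<in> \<Omega>. infdist x (- \<Omega>) \<ge> t}"

definition regular_domain :: "'a::metric_space measure \<Rightarrow> 'a set \<Rightarrow> bool" where
  "regular_domain \<nu> \<Omega> \<longleftrightarrow> bounded \<Omega> \<and> open \<Omega> \<and> tv_open \<nu> (indicator \<Omega>) UNIV < \<infinity> \<and>
     tv_open \<nu> (indicator \<Omega>) UNIV =
       Limsup (at_right 0) (\<lambda>t. emeasure \<nu> (\<Omega> - inner_set \<Omega> t) / ennreal t)"

definition L2 :: "'a measure \<Rightarrow> 'a set \<Rightarrow> ('a \<Rightarrow> real) set" where
  "L2 \<nu> \<Omega> = {u. u \<in> borel_measurable \<nu> \<and> (\<integral>\<^sup>+ x. ennreal ((u x)\<^sup>2) * indicator \<Omega> x \<partial>\<nu>) < \<infinity>}"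

definition L2norm :: "'a measure \<Rightarrow> 'a set \<Rightarrow> ('a \<Rightarrow> real) \<Rightarrow> real" where
  "L2norm \<nu> \<Omega> u = sqrt (LINT x:\<Omega>|\<nu>. (u x)\<^sup>2)"

definition L2inner :: "'a measure \<Rightarrow> 'a set \<Rightarrow> ('a \<Rightarrow> real) \<Rightarrow> ('a \<Rightarrow> real) \<Rightarrow> real" where
  "L2inner \<nu> \<Omega> u v = (LINT x:\<Omega>|\<nu>. u x * v x)"

definition TV0 :: "'a::metric_space measure \<Rightarrow> 'a set \<Rightarrow> ('a \<Rightarrow> real) \<Rightarrow> ereal" where
  "TV0 \<nu> \<Omega> u =
     (if u \<in> L2 \<nu> \<Omega> \<and> set_integrable \<nu> \<Omega> u \<and> tv_open \<nu> u \<Omega> < \<infinity>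
      then enn2ereal (tv_open \<nu> u \<Omega> +
             (\<integral>\<^sup>+ x. ennreal \<bar>trace_pt \<nu> \<Omega> u x\<bar> * indicator (frontier \<Omega>) x \<partial>perimeter_measure \<nu> \<Omega>))
      else \<infinity>)"

definition lambda1 :: "'a::metric_space measure \<Rightarrow> 'a set \<Rightarrow> ereal" where
  "lambda1 \<nu> \<Omega> = (INF v \<in> {v \<in> L2 \<nu> \<Omega>. L2norm \<nu> \<Omega> v \<noteq> 0}. TV0 \<nu> \<Omega> v / ereal (L2norm \<nu> \<Omega> v))"

definition subdiff :: "'a measure \<Rightarrow> 'a set \<Rightarrow> (('a \<Rightarrow> real) \<Rightarrow> ereal) \<Rightarrow> ('a \<Rightarrow> real) \<Rightarrow> ('a \<Rightarrow> real) set" where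
  "subdiff \<nu> \<Omega> F u = {v \<in> L2 \<nu> \<Omega>. F u \<noteq> \<infinity> \<and> F u \<noteq> - \<infinity> \<and>
      (\<forall>w \<in> L2 \<nu> \<Omega>. F u + ereal (L2inner \<nu> \<Omega> v (\<lambda>x. w x - u x)) \<le> F w)}"

definition abs_cont_L2 :: "'a measure \<Rightarrow> 'a set \<Rightarrow> (real \<Rightarrow> 'a \<Rightarrow> real) \<Rightarrow> real \<Rightarrow> real \<Rightarrow> bool" where
  "abs_cont_L2 \<nu> \<Omega> u a b \<longleftrightarrow> (\<forall>\<epsilon>>0. \<exists>\<delta>>0. \<forall>(n::nat) aa bb.
      (\<forall>i<n. a \<le> aa i \<and> aa i \<le> bb i \<and> bb i \<le> b) \<and>
      (\<forall>i<n. \<forall>j<n. i \<noteq> j \<longrightarrow> bb i \<le> aa j \<or> bb j \<le> aa i) \<and>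
      (\<Sum>i<n. bb i - aa i) < \<delta> \<longrightarrow>
      (\<Sum>i<n. L2norm \<nu> \<Omega> (\<lambda>x. u (bb i) x - u (aa i) x)) < \<epsilon>)"

definition has_L2_deriv :: "'a measure \<Rightarrow> 'a set \<Rightarrow> (real \<Rightarrow> 'a \<Rightarrow> real) \<Rightarrow> ('a \<Rightarrow> real) \<Rightarrow> real \<Rightarrow> bool" where
  "has_L2_deriv \<nu> \<Omega> u v t \<longleftrightarrow>
     ((\<lambda>h. L2norm \<nu> \<Omega> (\<lambda>x. (u (t + h) x - u t x) / h - v x)) \<longlongrightarrow> 0) (at 0)"

text \<open>Strong solution (Brezis) of u' + dF(u) \<ni> 0 on [0,infinity), u(0) = u0.\<close>
definition strong_solution :: "'a measure \<Rightarrow> 'a set \<Rightarrow> (('a \<Rightarrow> real) \<Rightarrow> ereal) \<Rightarrow> ('a \<Rightarrow> real) \<Rightarrow> (real \<Rightarrow> 'a \<Rightarrow> real) \<Rightarrow> bool" where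
  "strong_solution \<nu> \<Omega> F u0 u \<longleftrightarrow>
     (\<forall>t\<ge>0. u t \<in> L2 \<nu> \<Omega>) \<and>
     (\<forall>t\<ge>0. ((\<lambda>s. L2norm \<nu> \<Omega> (\<lambda>x. u s x - u t x)) \<longlongrightarrow> 0) (at t within {0..})) \<and>
     L2norm \<nu> \<Omega> (\<lambda>x. u 0 x - u0 x) = 0 \<and>
     (\<forall>a b. 0 < a \<and> a \<le> b \<longrightarrow> abs_cont_L2 \<nu> \<Omega> u a b) \<and>
     (AE t in lborel. t > 0 \<longrightarrow>
        (\<exists>v \<in> L2 \<nu> \<Omega>. has_L2_deriv \<nu> \<Omega> u v t \<and> (\<lambda>x. - v x) \<in> subdiff \<nu> \<Omega> F (u t)))"

end

theory Submission
  imports Defs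
begin

(* Testing the subgradient inequality at u(t) against the zero function (TV0 0 = 0) gives
   <u'(t), u(t)> <= -TV0(u(t)) <= -lambda1 * |u(t)| for almost every t. Hence, for every
   lam < lambda1, the function t -> |u(t)| + lam * t does not increase while u(t) is nonzero,
   so u(t) must vanish before time |u0| / lam, and once it vanishes it stays zero.
   The monotonicity is obtained without differentiating the norm: |u(t)| + lam * t is
   absolutely continuous and drops right after almost every time, and Luzin's N property
   of absolutely continuous functions excludes a net increase. Positivity of lambda1 is the
   assumed Sobolev inequality. *)

section \<open>Absolutely continuous real functions\<close>

definition nonoverlapping_intervals_in :: "real \<Rightarrow> real \<Rightarrow> nat \<Rightarrow> (nat \<Rightarrow> real) \<Rightarrow> (nat \<Rightarrow> real) \<Rightarrow> bool"
  where "nonoverlapping_intervals_in a b n aa bb \<longleftrightarrow>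
    (\<forall>i<n. a \<le> aa i \<and> aa i \<le> bb i \<and> bb i \<le> b) \<and>
    (\<forall>i<n. \<forall>j<n. i \<noteq> j \<longrightarrow> bb i \<le> aa j \<or> bb j \<le> aa i)"

definition abs_cont_real :: "(real \<Rightarrow> real) \<Rightarrow> real \<Rightarrow> real \<Rightarrow> bool" where
  "abs_cont_real g a b \<longleftrightarrow> (\<forall>\<epsilon>>0. \<exists>\<delta>>0. \<forall>n aa bb.
      nonoverlapping_intervals_in a b n aa bb \<and> (\<Sum>i<n. bb i - aa i) < \<delta> \<longrightarrow>
      (\<Sum>i<n. \<bar>g (bb i) - g (aa i)\<bar>) < \<epsilon>)"

lemma abs_cont_real_oscillation:
  assumes "abs_cont_real g a b" "0 < \<epsilon>"
  obtains \<delta> where "0 < \<delta>"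
    and "\<And>n lo hi r s. nonoverlapping_intervals_in a b n lo hi \<Longrightarrow> (\<Sum>i<n. hi i - lo i) < \<delta> \<Longrightarrow>
      \<forall>i<n. r i \<in> {lo i..hi i} \<and> s i \<in> {lo i..hi i} \<Longrightarrow>
      (\<Sum>i<n. \<bar>g (s i) - g (r i)\<bar>) < \<epsilon>"
proof -
  obtain \<delta> where "0 < \<delta>" and AC: "\<forall>n aa bb. nonoverlapping_intervals_in a b n aa bb \<and>
      (\<Sum>i<n. bb i - aa i) < \<delta> \<longrightarrow> (\<Sum>i<n. \<bar>g (bb i) - g (aa i)\<bar>) < \<epsilon>"
    using assms unfolding abs_cont_real_def by blast
  have "(\<Sum>i<n. \<bar>g (s i) - g (r i)\<bar>) < \<epsilon>"
    if "nonoverlapping_intervals_in a b n lo hi" "(\<Sum>i<n. hi i - lo i) < \<delta>"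
      and rs: "\<forall>i<n. r i \<in> {lo i..hi i} \<and> s i \<in> {lo i..hi i}" for n lo hi r s
  proof -
    define A where "A i = min (r i) (s i)" for i
    define B where "B i = max (r i) (s i)" for i
    have AB: "lo i \<le> A i \<and> A i \<le> B i \<and> B i \<le> hi i" if "i < n" for i
      using rs that unfolding A_def B_def by auto
    then have "nonoverlapping_intervals_in a b n A B"
      using that(1) unfolding nonoverlapping_intervals_in_def by (meson order_trans)
    moreover have "(\<Sum>i<n. B i - A i) \<le> (\<Sum>i<n. hi i - lo i)"
      using AB by (intro sum_mono) fastforce
    ultimately have "(\<Sum>i<n. \<bar>g (B i) - g (A i)\<bar>) < \<epsilon>"
      using AC that(2) by auto
    moreover have "\<bar>g (B i) - g (A i)\<bar> = \<bar>g (s i) - g (r i)\<bar>" for i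
      unfolding A_def B_def by (auto simp: min_def max_def)
    ultimately show ?thesis
      by simp
  qed
  with \<open>0 < \<delta>\<close> show thesis
    using that by blast
qed

lemma interior_Icc_disjoint_imp_le:
  fixes a b c d :: real
  assumes "a < b" "c < d" "interior {a..b} \<inter> interior {c..d} = {}"
  shows "b \<le> c \<or> d \<le> a"
proof (rule ccontr)
  assume "\<not> ?thesis"
  then have "(max a c + min b d) / 2 \<in> interior {a..b} \<inter> interior {c..d}"
    using assms(1,2) by (auto simp: min_def max_def)
  with assms(3) show False
    by blast
qed

lemma sum_interval_lengths_le_emeasure:
  fixes lo hi :: "nat \<Rightarrow> real"
  assumes "\<And>i. i < n \<Longrightarrow> lo i \<le> hi i"
    and "\<And>i j. i < n \<Longrightarrow> j < n \<Longrightarrow> i \<noteq> j \<Longrightarrow> hi i \<le> lo j \<or> hi j \<le> lo i"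
    and "\<And>i. i < n \<Longrightarrow> {lo i<..<hi i} \<subseteq> U" and "U \<in> sets lborel"
  shows "ennreal (\<Sum>i<n. hi i - lo i) \<le> emeasure lborel U"
proof -
  have "disjoint_family_on (\<lambda>i. {lo i<..<hi i}) {..<n}"
    unfolding disjoint_family_on_def using assms(2) by fastforce
  then have "(\<Sum>i<n. emeasure lborel {lo i<..<hi i}) = emeasure lborel (\<Union>i<n. {lo i<..<hi i})"
    by (intro sum_emeasure) auto
  moreover have "ennreal (\<Sum>i<n. hi i - lo i) = (\<Sum>i<n. emeasure lborel {lo i<..<hi i})"
    using assms(1) by (subst sum_ennreal[symmetric]) auto
  moreover have "(\<Union>i<n. {lo i<..<hi i}) \<subseteq> U"
    using assms(3) by blast
  ultimately show ?thesis
    using emeasure_mono[OF _ assms(4)] by simp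
qed

lemma interval_not_covered_by_short_intervals:
  fixes x y :: "nat \<Rightarrow> real"
  assumes "\<And>i. x i \<le> y i" and "\<And>n. (\<Sum>i<n. y i - x i) \<le> \<epsilon>" and "\<epsilon> < q - p"
  obtains c where "p < c" "c < q" "c \<notin> (\<Union>i. {x i..y i})"
proof -
  have "0 \<le> \<epsilon>"
    using assms(2)[of 0] by simp
  have "emeasure lborel (\<Union>i. {x i..y i}) \<le> (\<Sum>i. emeasure lborel {x i..y i})"
    by (intro emeasure_subadditive_countably) auto
  also have "\<dots> = (SUP n. ennreal (\<Sum>i<n. y i - x i))"
    using assms(1) by (simp add: suminf_eq_SUP sum_ennreal)
  also have "\<dots> \<le> ennreal \<epsilon>"
    using assms(2) by (intro SUP_least ennreal_leI) auto
  also have "\<dots> < ennreal (q - p)"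
    using \<open>0 \<le> \<epsilon>\<close> assms(3) by (intro ennreal_lessI) auto
  also have "\<dots> = emeasure lborel {p<..<q}"
    using \<open>0 \<le> \<epsilon>\<close> assms(3) by simp
  finally have less: "emeasure lborel (\<Union>i. {x i..y i}) < emeasure lborel {p<..<q}" .
  have "\<not> {p<..<q} \<subseteq> (\<Union>i. {x i..y i})"
  proof
    assume "{p<..<q} \<subseteq> (\<Union>i. {x i..y i})"
    then have "emeasure lborel {p<..<q} \<le> emeasure lborel (\<Union>i. {x i..y i})"
      by (intro emeasure_mono) auto
    with less show False
      using leD by blast
  qed
  then obtain c where "c \<in> {p<..<q}" "c \<notin> (\<Union>i. {x i..y i})"
    by (meson subsetI)
  then show thesis
    using that by auto
qed

lemma enumerate_nonoverlapping_intervals: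
  fixes \<D> :: "real set set"
  assumes "countable \<D>" "\<D> \<noteq> {}"
    and intervals: "\<And>K. K \<in> \<D> \<Longrightarrow> \<exists>c d. a \<le> c \<and> c < d \<and> d \<le> b \<and> K = {c..d}"
    and disjoint: "pairwise (\<lambda>A B. interior A \<inter> interior B = {}) \<D>"
  obtains lo hi :: "nat \<Rightarrow> real"
  where "\<And>i. a \<le> lo i \<and> lo i \<le> hi i \<and> hi i \<le> b"
    and "\<And>i j. i \<noteq> j \<Longrightarrow> hi i \<le> lo j \<or> hi j \<le> lo i"
    and "\<And>i. {lo i<..<hi i} \<subseteq> \<Union>\<D>"
    and "\<Union>\<D> \<subseteq> (\<Union>i. {lo i..hi i})"
proof -
  obtain f and I :: "nat set" where D_eq: "\<D> = f ` I" and "inj_on f I"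
    using \<open>countable \<D>\<close> unfolding countable_as_injective_image_subset by blast
  define lo where "lo i = (if i \<in> I then Inf (f i) else a)" for i
  define hi where "hi i = (if i \<in> I then Sup (f i) else a)" for i
  have f_interval: "f i = {lo i..hi i} \<and> a \<le> lo i \<and> lo i < hi i \<and> hi i \<le> b" if "i \<in> I" for i
  proof -
    have "f i \<in> \<D>"
      using D_eq that by blast
    then obtain c d where "a \<le> c" "c < d" "d \<le> b" "f i = {c..d}"
      using intervals by blast
    with that show ?thesis
      unfolding lo_def hi_def by simp
  qed
  have "a \<le> b"
    using intervals \<open>\<D> \<noteq> {}\<close> by fastforce
  show thesis
  proof (rule that)
    show "a \<le> lo i \<and> lo i \<le> hi i \<and> hi i \<le> b" for i
      using f_interval[of i] \<open>a \<le> b\<close> unfolding lo_def hi_def by (cases "i \<in> I") auto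
    show "{lo i<..<hi i} \<subseteq> \<Union>\<D>" for i
      using f_interval[of i] D_eq unfolding lo_def hi_def by (cases "i \<in> I") auto
    show "\<Union>\<D> \<subseteq> (\<Union>i. {lo i..hi i})"
      using f_interval D_eq by auto
  next
    fix i j :: nat
    assume "i \<noteq> j"
    show "hi i \<le> lo j \<or> hi j \<le> lo i"
    proof (cases "i \<in> I \<and> j \<in> I")
      case True
      with \<open>i \<noteq> j\<close> \<open>inj_on f I\<close> have "f i \<noteq> f j"
        by (meson inj_on_contraD)
      then have "interior (f i) \<inter> interior (f j) = {}"
        using disjoint True D_eq unfolding pairwise_def by blast
      then show ?thesis
        using True f_interval interior_Icc_disjoint_imp_le by metis
    next
      case False
      then show ?thesis
        using f_interval \<open>a \<le> b\<close> unfolding lo_def hi_def by auto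
    qed
  qed
qed

lemma null_set_interval_family:
  fixes S :: "real set"
  assumes "S \<in> null_sets lborel" "S \<subseteq> {a..b}" "a < b" "0 < e"
  obtains \<D> where "countable \<D>"
    and "\<And>K. K \<in> \<D> \<Longrightarrow> \<exists>c d. a \<le> c \<and> c < d \<and> d \<le> b \<and> K = {c..d}"
    and "pairwise (\<lambda>A B. interior A \<inter> interior B = {}) \<D>"
    and "S \<subseteq> \<Union>\<D>" and "\<Union>\<D> \<in> sets lborel" and "emeasure lborel (\<Union>\<D>) \<le> ennreal e"
proof -
  have "S \<in> null_sets lebesgue"
    using assms(1) by (rule null_sets_completionI)
  then have S_lmeasurable: "S \<in> lmeasurable" and "measure lebesgue S = 0"
    by (simp_all add: fmeasurableI_null_sets measure_eq_0_null_sets)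
  have S_box: "S \<subseteq> cbox a b"
    using assms(2) by simp
  obtain \<D> where "countable \<D>"
    and D_intervals: "\<And>K. K \<in> \<D> \<Longrightarrow> K \<subseteq> cbox a b \<and> K \<noteq> {} \<and> (\<exists>c d. K = cbox c d)"
    and D_disjoint: "pairwise (\<lambda>A B. interior A \<inter> interior B = {}) \<D>"
    and "\<And>u v. cbox u v \<in> \<D> \<Longrightarrow> \<exists>n. \<forall>i \<in> Basis. v \<bullet> i - u \<bullet> i = (b \<bullet> i - a \<bullet> i)/2^n"
    and D_interior: "\<And>K. \<lbrakk>K \<in> \<D>; box a b \<noteq> {}\<rbrakk> \<Longrightarrow> interior K \<noteq> {}"
    and D_cover: "S \<subseteq> \<Union>\<D>" and "\<Union>\<D> \<in> lmeasurable"
    and D_measure: "measure lebesgue (\<Union>\<D>) \<le> measure lebesgue S + e"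
    by (rule measurable_outer_intervals_bounded[OF S_lmeasurable S_box \<open>0 < e\<close>]) (rule that)
  have intervals: "\<exists>c d. a \<le> c \<and> c < d \<and> d \<le> b \<and> K = {c..d}" if K: "K \<in> \<D>" for K
  proof -
    obtain c d where "K = {c..d}" "K \<subseteq> {a..b}"
      using D_intervals[OF K] by auto
    moreover have "interior K \<noteq> {}"
      using D_interior[OF K] assms(3) by auto
    ultimately show ?thesis
      by (intro exI[of _ c] exI[of _ d]) auto
  qed
  have "K \<in> sets lborel" if "K \<in> \<D>" for K
    using intervals[OF that] by auto
  then have "\<Union>\<D> \<in> sets lborel"
    using \<open>countable \<D>\<close> by (intro sets.countable_Union) auto
  moreover have "emeasure lborel (\<Union>\<D>) \<le> ennreal e"
  proof -
    have "emeasure lborel (\<Union>\<D>) = emeasure lebesgue (\<Union>\<D>)"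
      using \<open>\<Union>\<D> \<in> sets lborel\<close> by simp
    also have "\<dots> = ennreal (measure lebesgue (\<Union>\<D>))"
      using \<open>\<Union>\<D> \<in> lmeasurable\<close> by (simp add: emeasure_eq_measure2)
    also have "\<dots> \<le> ennreal e"
      using D_measure \<open>measure lebesgue S = 0\<close> by (simp add: ennreal_leI)
    finally show ?thesis .
  qed
  ultimately show thesis
    using that \<open>countable \<D>\<close> intervals D_disjoint D_cover by blast
qed

lemma null_set_interval_cover:
  fixes S :: "real set"
  assumes "S \<in> null_sets lborel" "S \<subseteq> {a..b}" "a < b" "0 < \<delta>"
  obtains lo hi :: "nat \<Rightarrow> real"
  where "\<And>i. a \<le> lo i \<and> lo i \<le> hi i \<and> hi i \<le> b"
    and "\<And>i j. i \<noteq> j \<Longrightarrow> hi i \<le> lo j \<or> hi j \<le> lo i"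
    and "\<And>n. (\<Sum>i<n. hi i - lo i) < \<delta>"
    and "S \<subseteq> (\<Union>i. {lo i..hi i})"
proof -
  obtain \<D> where "countable \<D>"
    and intervals: "\<And>K. K \<in> \<D> \<Longrightarrow> \<exists>c d. a \<le> c \<and> c < d \<and> d \<le> b \<and> K = {c..d}"
    and disjoint: "pairwise (\<lambda>A B. interior A \<inter> interior B = {}) \<D>"
    and "S \<subseteq> \<Union>\<D>" and "\<Union>\<D> \<in> sets lborel" and small: "emeasure lborel (\<Union>\<D>) \<le> ennreal (\<delta> / 2)"
    using null_set_interval_family[OF assms(1-3), of "\<delta> / 2"] \<open>0 < \<delta>\<close> by auto
  show thesis
  proof (cases "\<D> = {}")
    case True
    show thesis
      by (rule that[of "\<lambda>i. a" "\<lambda>i. a"]) (use True \<open>S \<subseteq> \<Union>\<D>\<close> assms(3,4) in auto)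
  next
    case False
    obtain lo hi :: "nat \<Rightarrow> real" where lohi: "\<And>i. a \<le> lo i \<and> lo i \<le> hi i \<and> hi i \<le> b"
      and sep: "\<And>i j. i \<noteq> j \<Longrightarrow> hi i \<le> lo j \<or> hi j \<le> lo i"
      and inside: "\<And>i. {lo i<..<hi i} \<subseteq> \<Union>\<D>" and cover: "\<Union>\<D> \<subseteq> (\<Union>i. {lo i..hi i})"
      by (rule enumerate_nonoverlapping_intervals[OF \<open>countable \<D>\<close> False intervals disjoint],
          assumption, rule that)
    have "ennreal (\<Sum>i<n. hi i - lo i) \<le> emeasure lborel (\<Union>\<D>)" for n
      using lohi sep inside \<open>\<Union>\<D> \<in> sets lborel\<close> by (intro sum_interval_lengths_le_emeasure) auto
    then have "ennreal (\<Sum>i<n. hi i - lo i) \<le> ennreal (\<delta> / 2)" for n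
      using small by (rule order_trans)
    then have sum_le: "(\<Sum>i<n. hi i - lo i) \<le> \<delta> / 2" for n
      using \<open>0 < \<delta>\<close> by (simp add: ennreal_le_iff)
    have "(\<Sum>i<n. hi i - lo i) < \<delta>" for n
      using sum_le[of n] \<open>0 < \<delta>\<close> by linarith
    moreover have "S \<subseteq> (\<Union>i. {lo i..hi i})"
      using \<open>S \<subseteq> \<Union>\<D>\<close> cover by (rule subset_trans)
    ultimately show thesis
      using that lohi sep by blast
  qed
qed

lemma abs_cont_real_image_null_gap:
  fixes g :: "real \<Rightarrow> real"
  assumes "a < b" and cont: "continuous_on {a..b} g" and AC: "abs_cont_real g a b"
    and N: "N \<in> null_sets lborel" and "g a < g b"
  obtains c where "g a < c" "c < g b" "c \<notin> g ` (N \<inter> {a..b})"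
proof -
  define \<epsilon> where "\<epsilon> = (g b - g a) / 2"
  have "0 < \<epsilon>"
    using \<open>g a < g b\<close> by (simp add: \<epsilon>_def)
  then obtain \<delta> where "0 < \<delta>" and AC_\<delta>: "\<And>n lo hi r s. nonoverlapping_intervals_in a b n lo hi \<Longrightarrow>
      (\<Sum>i<n. hi i - lo i) < \<delta> \<Longrightarrow> \<forall>i<n. r i \<in> {lo i..hi i} \<and> s i \<in> {lo i..hi i} \<Longrightarrow>
      (\<Sum>i<n. \<bar>g (s i) - g (r i)\<bar>) < \<epsilon>"
    by (rule abs_cont_real_oscillation[OF AC]) (rule that)
  have "N \<inter> {a..b} \<in> null_sets lborel"
    using N by (rule null_set_Int2) simp
  then obtain lo hi :: "nat \<Rightarrow> real"
    where lohi: "\<And>i. a \<le> lo i \<and> lo i \<le> hi i \<and> hi i \<le> b"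
      and sep: "\<And>i j. i \<noteq> j \<Longrightarrow> hi i \<le> lo j \<or> hi j \<le> lo i"
      and short: "\<And>n. (\<Sum>i<n. hi i - lo i) < \<delta>"
      and cover: "N \<inter> {a..b} \<subseteq> (\<Union>i. {lo i..hi i})"
    using null_set_interval_cover[of "N \<inter> {a..b}" a b \<delta>] \<open>a < b\<close> \<open>0 < \<delta>\<close> by blast
  have "\<exists>r s. r \<in> {lo i..hi i} \<and> s \<in> {lo i..hi i} \<and> (\<forall>x\<in>{lo i..hi i}. g r \<le> g x \<and> g x \<le> g s)" for i
  proof -
    have "continuous_on {lo i..hi i} g"
      using cont by (rule continuous_on_subset) (use lohi[of i] in auto)
    moreover have "compact {lo i..hi i}" "{lo i..hi i} \<noteq> {}"
      using lohi[of i] by auto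
    ultimately show ?thesis
      using continuous_attains_inf continuous_attains_sup by metis
  qed
  then obtain r s where rs: "\<And>i. r i \<in> {lo i..hi i} \<and> s i \<in> {lo i..hi i} \<and>
      (\<forall>x\<in>{lo i..hi i}. g (r i) \<le> g x \<and> g x \<le> g (s i))"
    by metis
  have "nonoverlapping_intervals_in a b n lo hi" for n
    using lohi sep unfolding nonoverlapping_intervals_in_def by blast
  then have "(\<Sum>i<n. \<bar>g (s i) - g (r i)\<bar>) < \<epsilon>" for n
    using AC_\<delta> short rs by blast
  moreover have ordered: "g (r i) \<le> g (s i)" for i
    using rs[of i] by auto
  ultimately have "(\<Sum>i<n. g (s i) - g (r i)) \<le> \<epsilon>" for n
    by (simp add: less_imp_le)
  moreover have "\<epsilon> < g b - g a"
    using \<open>g a < g b\<close> by (simp add: \<epsilon>_def)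
  ultimately obtain c where c: "g a < c" "c < g b" "c \<notin> (\<Union>i. {g (r i)..g (s i)})"
    by (rule interval_not_covered_by_short_intervals[OF ordered])
  have "g x \<in> (\<Union>i. {g (r i)..g (s i)})" if x: "x \<in> N \<inter> {a..b}" for x
  proof -
    obtain i where "x \<in> {lo i..hi i}"
      using cover x by blast
    then show ?thesis
      using rs[of i] by auto
  qed
  with c(3) have "c \<notin> g ` (N \<inter> {a..b})"
    by blast
  with c(1,2) show thesis
    by (rule that)
qed

lemma abs_cont_real_nonincreasing_if_descending:
  fixes g :: "real \<Rightarrow> real"
  assumes "a < b" and cont: "continuous_on {a..b} g" and "abs_cont_real g a b"
    and "N \<in> null_sets lborel"
    and descend: "\<And>t \<eta>. t \<in> {a..<b} \<Longrightarrow> t \<notin> N \<Longrightarrow> \<eta> > 0 \<Longrightarrow> \<exists>s. t < s \<and> s < t + \<eta> \<and> g s < g t"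
  shows "g b \<le> g a"
proof (rule ccontr)
  assume "\<not> g b \<le> g a"
  then obtain c where c: "g a < c" "c < g b" "c \<notin> g ` (N \<inter> {a..b})"
    using abs_cont_real_image_null_gap[OF assms(1-4)] by force
  \<comment> \<open>The last time at which g is at most c: g equals c there, so it is not in N and g must descend.\<close>
  define Z where "Z = {a..b} \<inter> g -` {..c}"
  have "closed Z"
    unfolding Z_def by (rule continuous_closed_preimage[OF cont]) auto
  moreover have "a \<in> Z" "bdd_above Z"
    using \<open>a < b\<close> c unfolding Z_def by (auto intro: bdd_aboveI[of _ b])
  ultimately have tZ: "Sup Z \<in> Z" and last: "\<And>x. x \<in> Z \<Longrightarrow> x \<le> Sup Z"
    using closed_contains_Sup cSup_upper by blast+
  define t where "t = Sup Z"
  have t: "a \<le> t" "t < b" "g t \<le> c"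
    using tZ c unfolding Z_def t_def by (auto simp: order.order_iff_strict)
  have "g t = c"
  proof (rule ccontr)
    assume "g t \<noteq> c"
    have "continuous_on {t..b} g"
      using cont by (rule continuous_on_subset) (use t in auto)
    then obtain x where x: "t \<le> x" "x \<le> b" "g x = c"
      using IVT'[of g t c b] t c by auto
    then have "x \<in> Z"
      using t unfolding Z_def by auto
    then show False
      using last x \<open>g t \<noteq> c\<close> unfolding t_def by force
  qed
  then have "t \<notin> N"
    using c(3) t by auto
  then obtain s where s: "t < s" "s < b" "g s < g t"
    using descend[of t "b - t"] t by auto
  then have "s \<in> Z"
    using t \<open>g t = c\<close> unfolding Z_def by auto
  then show False
    using last s unfolding t_def by force
qed

section \<open>Extinction of linearly decaying functions\<close>

lemma zero_persists_if_nonincreasing_while_positive: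
  fixes \<phi> :: "real \<Rightarrow> real"
  assumes nonneg: "\<And>t. 0 \<le> \<phi> t" and cont: "continuous_on {0..} \<phi>"
    and mono: "\<And>a b. 0 < a \<Longrightarrow> a < b \<Longrightarrow> \<forall>t\<in>{a..b}. 0 < \<phi> t \<Longrightarrow> \<phi> b \<le> \<phi> a"
    and "0 \<le> s" "\<phi> s = 0" "s \<le> t"
  shows "\<phi> t = 0"
proof (rule ccontr)
  assume "\<phi> t \<noteq> 0"
  with nonneg[of t] have "0 < \<phi> t"
    by linarith
  define Z where "Z = {s..t} \<inter> \<phi> -` {0}"
  have "continuous_on {s..t} \<phi>"
    using cont by (rule continuous_on_subset) (use \<open>0 \<le> s\<close> in auto)
  then have "closed Z"
    unfolding Z_def by (rule continuous_closed_preimage) auto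
  moreover have "s \<in> Z" "bdd_above Z"
    using assms(5,6) unfolding Z_def by (auto intro: bdd_aboveI[of _ t])
  ultimately have "Sup Z \<in> Z" and last: "\<And>x. x \<in> Z \<Longrightarrow> x \<le> Sup Z"
    using closed_contains_Sup cSup_upper by blast+
  define z where "z = Sup Z"
  have z: "s \<le> z" "z \<le> t" "\<phi> z = 0"
    using \<open>Sup Z \<in> Z\<close> unfolding Z_def z_def by auto
  \<comment> \<open>A time after the last zero z where \<phi> has only climbed to half of its value at t.\<close>
  have "continuous_on {z..t} \<phi>"
    using cont by (rule continuous_on_subset) (use z \<open>0 \<le> s\<close> in auto)
  then obtain a where a: "z \<le> a" "a \<le> t" "\<phi> a = \<phi> t / 2"
    using IVT'[of \<phi> z "\<phi> t / 2" t] z \<open>0 < \<phi> t\<close> by auto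
  have "a \<noteq> z" "a \<noteq> t"
    using a z \<open>0 < \<phi> t\<close> by auto
  with a have "z < a" "a < t"
    by auto
  have "0 < \<phi> x" if "x \<in> {a..t}" for x
  proof (rule ccontr)
    assume "\<not> 0 < \<phi> x"
    then have "x \<in> Z"
      using nonneg[of x] that z \<open>z < a\<close> unfolding Z_def by auto
    with last that \<open>z < a\<close> show False
      unfolding z_def by force
  qed
  then have "\<phi> t \<le> \<phi> a"
    using mono[of a t] \<open>z < a\<close> \<open>a < t\<close> z \<open>0 \<le> s\<close> by auto
  with a \<open>0 < \<phi> t\<close> show False
    by simp
qed

lemma extinction_of_linear_decay:
  fixes \<phi> :: "real \<Rightarrow> real"
  assumes nonneg: "\<And>t. 0 \<le> \<phi> t" and cont: "continuous_on {0..} \<phi>"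
    and decay: "\<And>\<mu> a b. 0 \<le> \<mu> \<Longrightarrow> \<mu> < lam \<Longrightarrow> 0 < a \<Longrightarrow> a < b \<Longrightarrow> \<forall>t\<in>{a..b}. 0 < \<phi> t
        \<Longrightarrow> \<phi> b + \<mu> * b \<le> \<phi> a + \<mu> * a"
    and "0 < T" "\<phi> 0 < lam * T" "T \<le> t"
  shows "\<phi> t = 0"
proof -
  have "0 < lam"
    using nonneg[of 0] \<open>0 < T\<close> \<open>\<phi> 0 < lam * T\<close> by (smt (verit) zero_less_mult_iff)
  have mono: "\<phi> b \<le> \<phi> a" if "0 < a" "a < b" "\<forall>t\<in>{a..b}. 0 < \<phi> t" for a b
    using decay[of 0 a b] that \<open>0 < lam\<close> by simp
  have "\<phi> T = 0"
  proof (rule ccontr)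
    assume "\<phi> T \<noteq> 0"
    have pos: "0 < \<phi> r" if "0 \<le> r" "r \<le> T" for r
      using zero_persists_if_nonincreasing_while_positive[OF nonneg cont mono that(1) _ that(2)]
        nonneg[of r] \<open>\<phi> T \<noteq> 0\<close> by (auto simp: less_le)
    obtain \<mu> where \<mu>: "\<phi> 0 / T < \<mu>" "\<mu> < lam"
      using \<open>0 < T\<close> \<open>\<phi> 0 < lam * T\<close> dense by (metis pos_divide_less_eq)
    have "0 \<le> \<mu>"
      using \<mu>(1) nonneg[of 0] \<open>0 < T\<close> by (smt (verit) divide_nonneg_pos)
    have "(\<phi> \<longlongrightarrow> \<phi> 0) (at 0 within {0..})"
      using cont unfolding continuous_on_def by simp
    then have "(\<phi> \<longlongrightarrow> \<phi> 0) (at_right 0)"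
      by (rule tendsto_within_subset) auto
    then have "((\<lambda>a. \<phi> a + \<mu> * a) \<longlongrightarrow> \<phi> 0 + \<mu> * 0) (at_right 0)"
      by (intro tendsto_intros)
    moreover have "eventually (\<lambda>a. \<phi> T + \<mu> * T \<le> \<phi> a + \<mu> * a) (at_right 0)"
    proof -
      have "eventually (\<lambda>a. 0 < a \<and> a < T) (at_right 0)"
        using \<open>0 < T\<close> by (intro eventually_conj eventually_at_right_less) (auto simp: eventually_at_right)
      then show ?thesis
        by eventually_elim (use decay[OF \<open>0 \<le> \<mu>\<close> \<mu>(2)] pos in auto)
    qed
    ultimately have "\<phi> T + \<mu> * T \<le> \<phi> 0"
      by (intro tendsto_lowerbound) auto
    then show False
      using \<mu>(1) \<open>0 < T\<close> \<open>\<phi> T \<noteq> 0\<close> nonneg[of T] by (simp add: field_simps)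
  qed
  then show ?thesis
    using zero_persists_if_nonincreasing_while_positive[OF nonneg cont mono _ _ \<open>T \<le> t\<close>] \<open>0 < T\<close> by simp
qed

lemma Inf_ereal_le_if_above_subset:
  fixes c :: real
  assumes "\<And>T. c < T \<Longrightarrow> T \<in> S"
  shows "Inf (ereal ` S) \<le> ereal c"
proof (rule ccontr)
  assume "\<not> ?thesis"
  then have "ereal c < Inf (ereal ` S)"
    by simp
  then obtain z where z: "ereal c < ereal z" "ereal z < Inf (ereal ` S)"
    using ereal_dense2 by blast
  then have "z \<in> S"
    using assms by simp
  then have "Inf (ereal ` S) \<le> ereal z"
    by (simp add: Inf_lower)
  with z show False
    by simp
qed

lemma Inf_ereal_le_divide_if_decay_rate:
  fixes \<Lambda> :: ereal and x :: real
  assumes "0 < \<Lambda>" "0 \<le> x"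
    and rate: "\<And>lam T. 0 < lam \<Longrightarrow> ereal lam \<le> \<Lambda> \<Longrightarrow> 0 < T \<Longrightarrow> x < lam * T \<Longrightarrow> T \<in> S"
  shows "Inf (ereal ` S) \<le> ereal x / \<Lambda>"
proof (cases \<Lambda>)
  case (real L)
  with \<open>0 < \<Lambda>\<close> have "0 < L"
    by simp
  have "Inf (ereal ` S) \<le> ereal (x / L)"
  proof (rule Inf_ereal_le_if_above_subset)
    fix T
    assume "x / L < T"
    moreover from this have "0 < T"
      using \<open>0 < L\<close> \<open>0 \<le> x\<close> by (meson divide_nonneg_pos le_less_trans)
    ultimately show "T \<in> S"
      using rate[of L T] real \<open>0 < L\<close> by (simp add: field_simps)
  qed
  with real \<open>0 < L\<close> show ?thesis
    by simp
next
  case PInf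
  have "Inf (ereal ` S) \<le> ereal 0"
  proof (rule Inf_ereal_le_if_above_subset)
    fix T :: real
    assume "0 < T"
    then show "T \<in> S"
      using rate[of "(x + 1) / T" T] PInf \<open>0 \<le> x\<close> by simp
  qed
  with PInf show ?thesis
    by (simp add: zero_ereal_def)
next
  case MInf
  with \<open>0 < \<Lambda>\<close> show ?thesis
    by simp
qed

section \<open>The inner product space L2\<close>

lemma mem_L2_iff:
  assumes \<Omega>: "\<Omega> \<in> sets M"
  shows "f \<in> L2 M \<Omega> \<longleftrightarrow> f \<in> borel_measurable M \<and> set_integrable M \<Omega> (\<lambda>x. (f x)\<^sup>2)"
proof -
  have "(\<integral>\<^sup>+ x. ennreal (norm (indicator \<Omega> x *\<^sub>R (f x)\<^sup>2)) \<partial>M) = (\<integral>\<^sup>+ x. ennreal ((f x)\<^sup>2) * indicator \<Omega> x \<partial>M)"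
    by (rule nn_integral_cong) (auto split: split_indicator)
  moreover have "f \<in> borel_measurable M \<Longrightarrow> (\<lambda>x. indicator \<Omega> x *\<^sub>R (f x)\<^sup>2) \<in> borel_measurable M"
    using \<Omega> by measurable
  ultimately show ?thesis
    unfolding L2_def set_integrable_def integrable_iff_bounded by auto
qed
lemma set_integrable_mult_L2:
  assumes \<Omega>: "\<Omega> \<in> sets M" and f: "f \<in> L2 M \<Omega>" and g: "g \<in> L2 M \<Omega>"
  shows "set_integrable M \<Omega> (\<lambda>x. f x * g x)"
proof -
  have fm: "f \<in> borel_measurable M" and gm: "g \<in> borel_measurable M"
    and "set_integrable M \<Omega> (\<lambda>x. (f x)\<^sup>2 + (g x)\<^sup>2)"
    using f g mem_L2_iff[OF \<Omega>] by (auto intro: set_integral_add)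
  then have "integrable M (\<lambda>x. indicator \<Omega> x *\<^sub>R ((f x)\<^sup>2 + (g x)\<^sup>2))"
    by (simp add: set_integrable_def)
  moreover have "(\<lambda>x. indicator \<Omega> x *\<^sub>R (f x * g x)) \<in> borel_measurable M"
    using fm gm \<Omega> by measurable
  moreover have "\<bar>f x * g x\<bar> \<le> (f x)\<^sup>2 + (g x)\<^sup>2" for x
  proof -
    have "2 * (\<bar>f x\<bar> * \<bar>g x\<bar>) \<le> (f x)\<^sup>2 + (g x)\<^sup>2"
      using sum_squares_bound[of "\<bar>f x\<bar>" "\<bar>g x\<bar>"] by (simp add: mult.assoc)
    moreover have "0 \<le> \<bar>f x\<bar> * \<bar>g x\<bar>"
      by simp
    ultimately show ?thesis
      unfolding abs_mult by linarith
  qed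
  then have "AE x in M. norm (indicator \<Omega> x *\<^sub>R (f x * g x)) \<le> norm (indicator \<Omega> x *\<^sub>R ((f x)\<^sup>2 + (g x)\<^sup>2))"
    by (intro AE_I2) (auto split: split_indicator)
  ultimately show ?thesis
    unfolding set_integrable_def by (rule Bochner_Integration.integrable_bound)
qed

lemma L2_lincomb:
  assumes \<Omega>: "\<Omega> \<in> sets M" and f: "f \<in> L2 M \<Omega>" and g: "g \<in> L2 M \<Omega>"
  shows "(\<lambda>x. c * f x + d * g x) \<in> L2 M \<Omega>"
proof -
  have "(\<lambda>x. (c * f x + d * g x)\<^sup>2) = (\<lambda>x. c\<^sup>2 * (f x)\<^sup>2 + (2 * c * d) * (f x * g x) + d\<^sup>2 * (g x)\<^sup>2)"
    by (simp add: fun_eq_iff power2_eq_square algebra_simps)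
  moreover have "set_integrable M \<Omega> (\<lambda>x. c\<^sup>2 * (f x)\<^sup>2 + (2 * c * d) * (f x * g x) + d\<^sup>2 * (g x)\<^sup>2)"
    using f g set_integrable_mult_L2[OF \<Omega> f g] mem_L2_iff[OF \<Omega>]
    by (intro set_integral_add set_integrable_mult_right) auto
  moreover have "(\<lambda>x. c * f x + d * g x) \<in> borel_measurable M"
    using f g mem_L2_iff[OF \<Omega>] by auto
  ultimately show ?thesis
    using mem_L2_iff[OF \<Omega>] by simp
qed

lemma L2inner_commute: "L2inner M \<Omega> f g = L2inner M \<Omega> g f"
  unfolding L2inner_def by (simp add: mult.commute)

lemma L2inner_self_nonneg: "0 \<le> L2inner M \<Omega> f f"
  unfolding L2inner_def set_lebesgue_integral_def
  by (intro integral_nonneg_AE AE_I2) (auto split: split_indicator)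

lemma L2norm_eq_sqrt_L2inner: "L2norm M \<Omega> f = sqrt (L2inner M \<Omega> f f)"
  unfolding L2norm_def L2inner_def by (simp add: power2_eq_square)

lemma L2norm_nonneg: "0 \<le> L2norm M \<Omega> f"
  by (simp add: L2norm_def set_lebesgue_integral_def)

lemma L2inner_self_add_scaled:
  assumes \<Omega>: "\<Omega> \<in> sets M" and f: "f \<in> L2 M \<Omega>" and g: "g \<in> L2 M \<Omega>"
  shows "L2inner M \<Omega> (\<lambda>x. f x + t * g x) (\<lambda>x. f x + t * g x)
     = L2inner M \<Omega> f f + 2 * t * L2inner M \<Omega> f g + t\<^sup>2 * L2inner M \<Omega> g g"
proof -
  have "(\<lambda>x. (f x + t * g x) * (f x + t * g x)) = (\<lambda>x. f x * f x + (2 * t) * (f x * g x) + t\<^sup>2 * (g x * g x))"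
    by (simp add: fun_eq_iff power2_eq_square algebra_simps)
  moreover have "set_integrable M \<Omega> (\<lambda>x. f x * f x)" "set_integrable M \<Omega> (\<lambda>x. f x * g x)"
    "set_integrable M \<Omega> (\<lambda>x. g x * g x)"
    using set_integrable_mult_L2[OF \<Omega>] f g by auto
  ultimately show ?thesis
    unfolding L2inner_def by (simp add: set_integral_add set_integrable_mult_right set_integral_mult_right)
qed

lemma quadratic_nonneg_imp_le_sqrt_mult:
  fixes a b c :: real
  assumes "\<And>t. 0 \<le> a + 2 * t * b + t\<^sup>2 * c" and "0 \<le> a" and "0 \<le> c"
  shows "b \<le> sqrt a * sqrt c"
proof (cases "c = 0")
  case True
  have "b = 0"
  proof (rule ccontr)
    assume "b \<noteq> 0"
    have "0 \<le> a + 2 * (- (a + 1) / (2 * b)) * b + (- (a + 1) / (2 * b))\<^sup>2 * c"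
      by (rule assms(1))
    with True \<open>b \<noteq> 0\<close> show False
      by (simp add: field_simps)
  qed
  with assms show ?thesis
    by simp
next
  case False
  with assms(3) have "0 < c"
    by simp
  have "0 \<le> a + 2 * (- b / c) * b + (- b / c)\<^sup>2 * c"
    by (rule assms(1))
  with \<open>0 < c\<close> have "b\<^sup>2 \<le> a * c"
    by (simp add: power2_eq_square field_simps)
  then have "sqrt (b\<^sup>2) \<le> sqrt (a * c)"
    by (rule real_sqrt_le_mono)
  then show ?thesis
    by (simp add: real_sqrt_mult)
qed

lemma L2inner_le_L2norm_mult:
  assumes \<Omega>: "\<Omega> \<in> sets M" and f: "f \<in> L2 M \<Omega>" and g: "g \<in> L2 M \<Omega>"
  shows "L2inner M \<Omega> f g \<le> L2norm M \<Omega> f * L2norm M \<Omega> g"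
  unfolding L2norm_eq_sqrt_L2inner
proof (rule quadratic_nonneg_imp_le_sqrt_mult)
  show "0 \<le> L2inner M \<Omega> f f + 2 * t * L2inner M \<Omega> f g + t\<^sup>2 * L2inner M \<Omega> g g" for t
    using L2inner_self_add_scaled[OF \<Omega> f g, of t] L2inner_self_nonneg[of M \<Omega> "\<lambda>x. f x + t * g x"] by simp
qed (rule L2inner_self_nonneg)+

lemma L2norm_triangle:
  assumes \<Omega>: "\<Omega> \<in> sets M" and f: "f \<in> L2 M \<Omega>" and g: "g \<in> L2 M \<Omega>"
  shows "L2norm M \<Omega> (\<lambda>x. f x + g x) \<le> L2norm M \<Omega> f + L2norm M \<Omega> g"
proof -
  have "L2inner M \<Omega> (\<lambda>x. f x + g x) (\<lambda>x. f x + g x)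
      = L2inner M \<Omega> f f + 2 * L2inner M \<Omega> f g + L2inner M \<Omega> g g"
    using L2inner_self_add_scaled[OF \<Omega> f g, of 1] by simp
  also have "\<dots> \<le> (L2norm M \<Omega> f)\<^sup>2 + 2 * (L2norm M \<Omega> f * L2norm M \<Omega> g) + (L2norm M \<Omega> g)\<^sup>2"
    using L2inner_le_L2norm_mult[OF \<Omega> f g] L2inner_self_nonneg[of M \<Omega> f] L2inner_self_nonneg[of M \<Omega> g]
    by (simp add: L2norm_eq_sqrt_L2inner)
  also have "\<dots> = (L2norm M \<Omega> f + L2norm M \<Omega> g)\<^sup>2"
    by (simp add: power2_eq_square algebra_simps)
  finally have "sqrt (L2inner M \<Omega> (\<lambda>x. f x + g x) (\<lambda>x. f x + g x)) \<le> sqrt ((L2norm M \<Omega> f + L2norm M \<Omega> g)\<^sup>2)"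
    by (rule real_sqrt_le_mono)
  then show ?thesis
    using L2norm_nonneg[of M \<Omega> f] L2norm_nonneg[of M \<Omega> g] by (simp add: L2norm_eq_sqrt_L2inner)
qed

lemma L2norm_mult_const: "L2norm M \<Omega> (\<lambda>x. c * f x) = \<bar>c\<bar> * L2norm M \<Omega> f"
proof -
  have "(\<lambda>x. c * f x * (c * f x)) = (\<lambda>x. c\<^sup>2 * (f x * f x))"
    by (simp add: fun_eq_iff power2_eq_square)
  then have "L2inner M \<Omega> (\<lambda>x. c * f x) (\<lambda>x. c * f x) = c\<^sup>2 * L2inner M \<Omega> f f"
    unfolding L2inner_def by simp
  then show ?thesis
    by (simp add: L2norm_eq_sqrt_L2inner real_sqrt_mult)
qed

lemma abs_L2norm_diff_le:
  assumes \<Omega>: "\<Omega> \<in> sets M" and f: "f \<in> L2 M \<Omega>" and g: "g \<in> L2 M \<Omega>"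
  shows "\<bar>L2norm M \<Omega> f - L2norm M \<Omega> g\<bar> \<le> L2norm M \<Omega> (\<lambda>x. f x - g x)"
proof -
  have fg: "(\<lambda>x. f x - g x) \<in> L2 M \<Omega>" and gf: "(\<lambda>x. g x - f x) \<in> L2 M \<Omega>"
    using L2_lincomb[OF \<Omega> f g, of 1 "-1"] L2_lincomb[OF \<Omega> g f, of 1 "-1"] by simp_all
  have "L2norm M \<Omega> f \<le> L2norm M \<Omega> (\<lambda>x. f x - g x) + L2norm M \<Omega> g"
    using L2norm_triangle[OF \<Omega> fg g] by simp
  moreover have "L2norm M \<Omega> g \<le> L2norm M \<Omega> (\<lambda>x. g x - f x) + L2norm M \<Omega> f"
    using L2norm_triangle[OF \<Omega> gf f] by simp
  moreover have "L2norm M \<Omega> (\<lambda>x. g x - f x) = L2norm M \<Omega> (\<lambda>x. f x - g x)"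
    using L2norm_mult_const[of M \<Omega> "-1" "\<lambda>x. f x - g x"] by simp
  ultimately show ?thesis
    by linarith
qed

lemma zero_in_L2: "(\<lambda>x. 0) \<in> L2 M \<Omega>"
  unfolding L2_def by simp

lemma L2norm_add_scaled_le:
  assumes \<Omega>: "\<Omega> \<in> sets M" and w: "w \<in> L2 M \<Omega>" and v: "v \<in> L2 M \<Omega>"
    and pos: "0 < L2norm M \<Omega> w" and inner: "L2inner M \<Omega> v w \<le> - lam * L2norm M \<Omega> w"
    and "0 \<le> h" "h * lam \<le> L2norm M \<Omega> w"
  shows "L2norm M \<Omega> (\<lambda>x. w x + h * v x)
    \<le> L2norm M \<Omega> w - h * lam + h\<^sup>2 * L2inner M \<Omega> v v / (2 * L2norm M \<Omega> w)"
proof -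
  define \<phi> where "\<phi> = L2norm M \<Omega> w"
  define V where "V = L2inner M \<Omega> v v"
  have "0 \<le> V"
    unfolding V_def by (rule L2inner_self_nonneg)
  have "\<phi>\<^sup>2 = L2inner M \<Omega> w w"
    unfolding \<phi>_def L2norm_eq_sqrt_L2inner using L2inner_self_nonneg by simp
  then have "L2inner M \<Omega> (\<lambda>x. w x + h * v x) (\<lambda>x. w x + h * v x) = \<phi>\<^sup>2 + 2 * h * L2inner M \<Omega> v w + h\<^sup>2 * V"
    using L2inner_self_add_scaled[OF \<Omega> w v, of h] L2inner_commute[of M \<Omega> w v] by (simp add: V_def)
  also have "\<dots> \<le> \<phi>\<^sup>2 - 2 * h * lam * \<phi> + h\<^sup>2 * V"
    using mult_left_mono[OF inner \<open>0 \<le> h\<close>] unfolding \<phi>_def by (simp add: algebra_simps)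
  also have "\<dots> \<le> \<phi>\<^sup>2 - 2 * h * lam * \<phi> + h\<^sup>2 * V + (h * lam - h\<^sup>2 * V / (2 * \<phi>))\<^sup>2"
    by simp
  also have "\<dots> = (\<phi> - h * lam + h\<^sup>2 * V / (2 * \<phi>))\<^sup>2"
    using pos unfolding \<phi>_def by (simp add: power2_eq_square field_simps)
  finally have "L2norm M \<Omega> (\<lambda>x. w x + h * v x) \<le> \<bar>\<phi> - h * lam + h\<^sup>2 * V / (2 * \<phi>)\<bar>"
    unfolding L2norm_eq_sqrt_L2inner by (metis real_sqrt_abs real_sqrt_le_mono)
  moreover have "0 \<le> \<phi> - h * lam + h\<^sup>2 * V / (2 * \<phi>)"
    using assms(7) \<open>0 \<le> V\<close> pos unfolding \<phi>_def by simp
  ultimately show ?thesis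
    unfolding \<phi>_def V_def by simp
qed

lemma L2norm_step_below_slope:
  assumes \<Omega>: "\<Omega> \<in> sets M" and w: "w \<in> L2 M \<Omega>" and v: "v \<in> L2 M \<Omega>" and y: "y \<in> L2 M \<Omega>"
    and pos: "0 < L2norm M \<Omega> w" and inner: "L2inner M \<Omega> v w \<le> - lam * L2norm M \<Omega> w"
    and "0 < h" "h * lam \<le> L2norm M \<Omega> w" "h * L2inner M \<Omega> v v \<le> (lam - \<mu>) * L2norm M \<Omega> w"
    and quotient: "L2norm M \<Omega> (\<lambda>x. (y x - w x) / h - v x) < (lam - \<mu>) / 2"
  shows "L2norm M \<Omega> y + \<mu> * h < L2norm M \<Omega> w"
proof -
  define \<phi> where "\<phi> = L2norm M \<Omega> w"
  define V where "V = L2inner M \<Omega> v v"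
  define r where "r x = (y x - w x) / h - v x" for x
  have y_eq: "y = (\<lambda>x. (w x + h * v x) + h * r x)"
    using \<open>0 < h\<close> unfolding r_def by (auto simp: field_simps)
  have first: "(\<lambda>x. w x + h * v x) \<in> L2 M \<Omega>"
    using L2_lincomb[OF \<Omega> w v, of 1 h] by simp
  have "(\<lambda>x. y x - w x) \<in> L2 M \<Omega>"
    using L2_lincomb[OF \<Omega> y w, of 1 "-1"] by simp
  moreover have "(\<lambda>x. h * r x) = (\<lambda>x. 1 * (y x - w x) + (-h) * v x)"
    using \<open>0 < h\<close> by (auto simp: fun_eq_iff r_def field_simps)
  ultimately have second: "(\<lambda>x. h * r x) \<in> L2 M \<Omega>"
    using L2_lincomb[OF \<Omega> _ v] by metis
  have "L2norm M \<Omega> y \<le> L2norm M \<Omega> (\<lambda>x. w x + h * v x) + h * L2norm M \<Omega> r"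
    using L2norm_triangle[OF \<Omega> first second] L2norm_mult_const[of M \<Omega> h r] \<open>0 < h\<close>
    by (subst y_eq) simp
  also have "\<dots> \<le> \<phi> - h * lam + h * (h * V / (2 * \<phi>)) + h * L2norm M \<Omega> r"
    using L2norm_add_scaled_le[OF \<Omega> w v pos inner, of h] assms(7,8) unfolding \<phi>_def V_def
    by (simp add: power2_eq_square)
  also have "\<dots> < \<phi> - h * lam + h * ((lam - \<mu>) / 2) + h * ((lam - \<mu>) / 2)"
    using assms(7,9) quotient pos unfolding r_def \<phi>_def V_def
    by (intro add_le_less_mono add_left_mono mult_left_mono mult_strict_left_mono) (auto simp: field_simps)
  finally show ?thesis
    unfolding \<phi>_def by (simp add: algebra_simps)
qed

lemma L2norm_below_slope_soon:
  assumes \<Omega>: "\<Omega> \<in> sets M" and w: "w \<in> L2 M \<Omega>" and v: "v \<in> L2 M \<Omega>"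
    and U: "\<And>h. 0 < h \<Longrightarrow> U h \<in> L2 M \<Omega>"
    and pos: "0 < L2norm M \<Omega> w" and "\<mu> < lam" and inner: "L2inner M \<Omega> v w \<le> - lam * L2norm M \<Omega> w"
    and deriv: "((\<lambda>h. L2norm M \<Omega> (\<lambda>x. (U h x - w x) / h - v x)) \<longlongrightarrow> 0) (at 0)"
    and "0 < \<eta>"
  obtains h where "0 < h" "h < \<eta>" "L2norm M \<Omega> (U h) + \<mu> * h < L2norm M \<Omega> w"
proof -
  have small: "((\<lambda>h. h * c) \<longlongrightarrow> 0) (at_right 0)" for c :: real
    by (auto intro!: tendsto_eq_intros)
  have "eventually (\<lambda>h. 0 < h \<and> h < \<eta>) (at_right 0)"
    using \<open>0 < \<eta>\<close> by (auto simp: eventually_at_right_field)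
  moreover have "eventually (\<lambda>h. h * lam < L2norm M \<Omega> w) (at_right 0)"
    using order_tendstoD(2)[OF small pos] .
  moreover have "eventually (\<lambda>h. h * L2inner M \<Omega> v v < (lam - \<mu>) * L2norm M \<Omega> w) (at_right 0)"
    using order_tendstoD(2)[OF small] \<open>\<mu> < lam\<close> pos by simp
  moreover have "eventually (\<lambda>h. L2norm M \<Omega> (\<lambda>x. (U h x - w x) / h - v x) < (lam - \<mu>) / 2) (at_right 0)"
    using order_tendstoD(2)[OF tendsto_within_subset[OF deriv subset_UNIV], of "(lam - \<mu>) / 2"] \<open>\<mu> < lam\<close>
    by simp
  ultimately have "eventually (\<lambda>h. 0 < h \<and> h < \<eta> \<and> L2norm M \<Omega> (U h) + \<mu> * h < L2norm M \<Omega> w) (at_right 0)"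
  proof eventually_elim
    case (elim h)
    then show ?case
      using L2norm_step_below_slope[OF \<Omega> w v U pos inner] by auto
  qed
  then show thesis
    using that eventually_happens'[OF trivial_limit_at_right_real] by blast
qed

section \<open>Strong solutions of gradient flows of coercive functionals\<close>

lemma strong_solution_L2norm_initial:
  assumes "\<Omega> \<in> sets M" "strong_solution M \<Omega> F u0 u" "u0 \<in> L2 M \<Omega>"
  shows "L2norm M \<Omega> (u 0) = L2norm M \<Omega> u0"
  using abs_L2norm_diff_le[OF assms(1) _ assms(3), of "u 0"] assms(2)
  unfolding strong_solution_def by auto

lemma strong_solution_L2norm_continuous:
  assumes \<Omega>: "\<Omega> \<in> sets M" and sol: "strong_solution M \<Omega> F u0 u"
  shows "continuous_on {0..} (\<lambda>t. L2norm M \<Omega> (u t))"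
  unfolding continuous_on_def
proof
  fix t :: real
  assume "t \<in> {0..}"
  have L2: "\<And>s. 0 \<le> s \<Longrightarrow> u s \<in> L2 M \<Omega>"
    and cont: "((\<lambda>s. L2norm M \<Omega> (\<lambda>x. u s x - u t x)) \<longlongrightarrow> 0) (at t within {0..})"
    using sol \<open>t \<in> {0..}\<close> unfolding strong_solution_def by auto
  show "((\<lambda>t. L2norm M \<Omega> (u t)) \<longlongrightarrow> L2norm M \<Omega> (u t)) (at t within {0..})"
  proof (rule metric_tendsto_imp_tendsto[OF cont])
    have "eventually (\<lambda>s. s \<in> {0..}) (at t within {0..})"
      by (simp add: eventually_at_filter)
    then show "\<forall>\<^sub>F s in at t within {0..}.
        dist (L2norm M \<Omega> (u s)) (L2norm M \<Omega> (u t)) \<le> dist (L2norm M \<Omega> (\<lambda>x. u s x - u t x)) 0"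
    proof eventually_elim
      case (elim s)
      then show ?case
        using abs_L2norm_diff_le[OF \<Omega> L2[of s] L2[of t]] \<open>t \<in> {0..}\<close>
          L2norm_nonneg[of M \<Omega> "\<lambda>x. u s x - u t x"]
        by (simp add: dist_real_def)
    qed
  qed
qed

lemma abs_cont_L2_iff_nonoverlapping:
  "abs_cont_L2 M \<Omega> u a b \<longleftrightarrow> (\<forall>\<epsilon>>0. \<exists>\<delta>>0. \<forall>n aa bb.
    nonoverlapping_intervals_in a b n aa bb \<and> (\<Sum>i<n. bb i - aa i) < \<delta> \<longrightarrow>
    (\<Sum>i<n. L2norm M \<Omega> (\<lambda>x. u (bb i) x - u (aa i) x)) < \<epsilon>)"
  unfolding abs_cont_L2_def nonoverlapping_intervals_in_def by (simp add: conj_assoc)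

lemma abs_cont_real_L2norm_plus_linear:
  assumes \<Omega>: "\<Omega> \<in> sets M" and L2: "\<And>t. t \<in> {a..b} \<Longrightarrow> u t \<in> L2 M \<Omega>"
    and AC: "abs_cont_L2 M \<Omega> u a b" and "0 \<le> \<mu>"
  shows "abs_cont_real (\<lambda>s. L2norm M \<Omega> (u s) + \<mu> * s) a b"
  unfolding abs_cont_real_def
proof (intro allI impI)
  fix \<epsilon> :: real
  assume "0 < \<epsilon>"
  then have "0 < \<epsilon> / 2"
    by simp
  then obtain \<delta>1 where "0 < \<delta>1" and AC_\<delta>1: "\<forall>n aa bb. nonoverlapping_intervals_in a b n aa bb \<and>
      (\<Sum>i<n. bb i - aa i) < \<delta>1 \<longrightarrow> (\<Sum>i<n. L2norm M \<Omega> (\<lambda>x. u (bb i) x - u (aa i) x)) < \<epsilon> / 2"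
    using AC unfolding abs_cont_L2_iff_nonoverlapping by blast
  define \<delta> where "\<delta> = min \<delta>1 (\<epsilon> / (2 * (\<mu> + 1)))"
  have "(\<Sum>i<n. \<bar>(L2norm M \<Omega> (u (bb i)) + \<mu> * bb i) - (L2norm M \<Omega> (u (aa i)) + \<mu> * aa i)\<bar>) < \<epsilon>"
    if part: "nonoverlapping_intervals_in a b n aa bb" and short: "(\<Sum>i<n. bb i - aa i) < \<delta>" for n aa bb
  proof -
    have "(\<Sum>i<n. \<bar>(L2norm M \<Omega> (u (bb i)) + \<mu> * bb i) - (L2norm M \<Omega> (u (aa i)) + \<mu> * aa i)\<bar>)
        \<le> (\<Sum>i<n. L2norm M \<Omega> (\<lambda>x. u (bb i) x - u (aa i) x)) + \<mu> * (\<Sum>i<n. bb i - aa i)"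
      unfolding sum_distrib_left sum.distrib[symmetric]
    proof (rule sum_mono)
      fix i
      assume "i \<in> {..<n}"
      with part have "aa i \<in> {a..b}" "bb i \<in> {a..b}" "aa i \<le> bb i"
        unfolding nonoverlapping_intervals_in_def by auto
      then show "\<bar>(L2norm M \<Omega> (u (bb i)) + \<mu> * bb i) - (L2norm M \<Omega> (u (aa i)) + \<mu> * aa i)\<bar>
          \<le> L2norm M \<Omega> (\<lambda>x. u (bb i) x - u (aa i) x) + \<mu> * (bb i - aa i)"
        using abs_L2norm_diff_le[OF \<Omega> L2 L2, of "bb i" "aa i"] mult_left_mono[of "aa i" "bb i" \<mu>] \<open>0 \<le> \<mu>\<close>
        by (simp add: abs_le_iff right_diff_distrib)
    qed
    also have "\<dots> < \<epsilon> / 2 + \<epsilon> / 2"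
    proof (rule add_less_le_mono)
      show "(\<Sum>i<n. L2norm M \<Omega> (\<lambda>x. u (bb i) x - u (aa i) x)) < \<epsilon> / 2"
        using AC_\<delta>1 part short unfolding \<delta>_def by simp
      have "\<mu> * (\<Sum>i<n. bb i - aa i) \<le> \<mu> * (\<epsilon> / (2 * (\<mu> + 1)))"
        using short \<open>0 \<le> \<mu>\<close> unfolding \<delta>_def by (intro mult_left_mono) auto
      also have "\<dots> \<le> \<epsilon> / 2"
        using \<open>0 \<le> \<mu>\<close> \<open>0 < \<epsilon>\<close> by (simp add: field_simps)
      finally show "\<mu> * (\<Sum>i<n. bb i - aa i) \<le> \<epsilon> / 2" .
    qed
    finally show ?thesis
      by simp
  qed
  moreover have "0 < \<delta>"
    unfolding \<delta>_def using \<open>0 < \<delta>1\<close> \<open>0 < \<epsilon>\<close> \<open>0 \<le> \<mu>\<close> by simp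
  ultimately show "\<exists>\<delta>>0. \<forall>n aa bb. nonoverlapping_intervals_in a b n aa bb \<and> (\<Sum>i<n. bb i - aa i) < \<delta> \<longrightarrow>
      (\<Sum>i<n. \<bar>(L2norm M \<Omega> (u (bb i)) + \<mu> * bb i) - (L2norm M \<Omega> (u (aa i)) + \<mu> * aa i)\<bar>) < \<epsilon>"
    by blast
qed

lemma subdiff_inner_le_if_coercive:
  assumes F0: "F (\<lambda>x. 0) = 0" and coercive: "\<And>v. v \<in> L2 M \<Omega> \<Longrightarrow> ereal (lam * L2norm M \<Omega> v) \<le> F v"
    and w: "w \<in> L2 M \<Omega>" and sub: "(\<lambda>x. - v x) \<in> subdiff M \<Omega> F w"
  shows "L2inner M \<Omega> v w \<le> - lam * L2norm M \<Omega> w"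
proof -
  obtain Fw where Fw: "F w = ereal Fw"
    using sub unfolding subdiff_def by (cases "F w") auto
  have "\<forall>w'\<in>L2 M \<Omega>. F w + ereal (L2inner M \<Omega> (\<lambda>x. - v x) (\<lambda>x. w' x - w x)) \<le> F w'"
    using sub unfolding subdiff_def by simp
  from this[rule_format, OF zero_in_L2]
  have "F w + ereal (L2inner M \<Omega> (\<lambda>x. - v x) (\<lambda>x. 0 - w x)) \<le> F (\<lambda>x. 0)"
    by simp
  moreover have "L2inner M \<Omega> (\<lambda>x. - v x) (\<lambda>x. 0 - w x) = L2inner M \<Omega> v w"
    unfolding L2inner_def by simp
  ultimately have "Fw + L2inner M \<Omega> v w \<le> 0"
    using F0 Fw by simp
  moreover have "lam * L2norm M \<Omega> w \<le> Fw"
    using coercive[OF w] Fw by simp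
  ultimately show ?thesis
    by simp
qed

lemma strong_solution_L2norm_decay:
  assumes \<Omega>: "\<Omega> \<in> sets M" and sol: "strong_solution M \<Omega> F u0 u"
    and F0: "F (\<lambda>x. 0) = 0"
    and coercive: "\<And>v. v \<in> L2 M \<Omega> \<Longrightarrow> ereal (lam * L2norm M \<Omega> v) \<le> F v"
    and "0 \<le> \<mu>" "\<mu> < lam" "0 < a" "a < b"
    and pos: "\<forall>t\<in>{a..b}. 0 < L2norm M \<Omega> (u t)"
  shows "L2norm M \<Omega> (u b) + \<mu> * b \<le> L2norm M \<Omega> (u a) + \<mu> * a"
proof -
  define good where "good t \<longleftrightarrow> 0 < t \<longrightarrow>
      (\<exists>v \<in> L2 M \<Omega>. has_L2_deriv M \<Omega> u v t \<and> (\<lambda>x. - v x) \<in> subdiff M \<Omega> F (u t))" for t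
  have L2: "\<And>t. 0 \<le> t \<Longrightarrow> u t \<in> L2 M \<Omega>"
    and AC: "abs_cont_L2 M \<Omega> u a b"
    and "AE t in lborel. good t"
    using sol assms(7,8) unfolding strong_solution_def good_def by auto
  then obtain N where "N \<in> null_sets lborel" and "{t \<in> space lborel. \<not> good t} \<subseteq> N"
    unfolding eventually_ae_filter by blast
  then have deriv: "\<And>t. t \<notin> N \<Longrightarrow> 0 < t \<Longrightarrow>
      \<exists>v \<in> L2 M \<Omega>. has_L2_deriv M \<Omega> u v t \<and> (\<lambda>x. - v x) \<in> subdiff M \<Omega> F (u t)"
    unfolding good_def by auto
  show ?thesis
  proof (rule abs_cont_real_nonincreasing_if_descending[OF \<open>a < b\<close> _ _ \<open>N \<in> null_sets lborel\<close>])
    have "continuous_on {a..b} (\<lambda>s. L2norm M \<Omega> (u s))"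
      using strong_solution_L2norm_continuous[OF \<Omega> sol] by (rule continuous_on_subset) (use \<open>0 < a\<close> in auto)
    then show "continuous_on {a..b} (\<lambda>s. L2norm M \<Omega> (u s) + \<mu> * s)"
      by (intro continuous_intros)
    show "abs_cont_real (\<lambda>s. L2norm M \<Omega> (u s) + \<mu> * s) a b"
      using L2 \<open>0 < a\<close> by (intro abs_cont_real_L2norm_plus_linear[OF \<Omega> _ AC \<open>0 \<le> \<mu>\<close>]) auto
  next
    fix t \<eta> :: real
    assume t: "t \<in> {a..<b}" "t \<notin> N" and "0 < \<eta>"
    then obtain v where v: "v \<in> L2 M \<Omega>" "has_L2_deriv M \<Omega> u v t" "(\<lambda>x. - v x) \<in> subdiff M \<Omega> F (u t)"
      using deriv \<open>0 < a\<close> by force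
    have "0 < t" "0 < L2norm M \<Omega> (u t)"
      using t pos \<open>0 < a\<close> by auto
    have ut: "u t \<in> L2 M \<Omega>"
      using L2 \<open>0 < t\<close> by simp
    have inner: "L2inner M \<Omega> v (u t) \<le> - lam * L2norm M \<Omega> (u t)"
      using subdiff_inner_le_if_coercive[OF F0 coercive ut v(3)] .
    have deriv_t: "((\<lambda>h. L2norm M \<Omega> (\<lambda>x. (u (t + h) x - u t x) / h - v x)) \<longlongrightarrow> 0) (at 0)"
      using v(2) unfolding has_L2_deriv_def .
    have "u (t + h) \<in> L2 M \<Omega>" if "0 < h" for h
      using L2 that \<open>0 < t\<close> by simp
    then obtain h where "0 < h" "h < \<eta>" "L2norm M \<Omega> (u (t + h)) + \<mu> * h < L2norm M \<Omega> (u t)"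
      by (rule L2norm_below_slope_soon[OF \<Omega> ut v(1) _ \<open>0 < L2norm M \<Omega> (u t)\<close> \<open>\<mu> < lam\<close> inner deriv_t
            \<open>0 < \<eta>\<close>])
    then show "\<exists>s. t < s \<and> s < t + \<eta> \<and> L2norm M \<Omega> (u s) + \<mu> * s < L2norm M \<Omega> (u t) + \<mu> * t"
      by (intro exI[of _ "t + h"]) (auto simp: algebra_simps)
  qed
qed

lemma strong_solution_extinction:
  assumes \<Omega>: "\<Omega> \<in> sets M" and sol: "strong_solution M \<Omega> F u0 u" and "u0 \<in> L2 M \<Omega>"
    and F0: "F (\<lambda>x. 0) = 0"
    and coercive: "\<And>v. v \<in> L2 M \<Omega> \<Longrightarrow> ereal (lam * L2norm M \<Omega> v) \<le> F v"
    and "0 < T" "L2norm M \<Omega> u0 < lam * T" "T \<le> t"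
  shows "L2norm M \<Omega> (u t) = 0"
proof (rule extinction_of_linear_decay[where \<phi> = "\<lambda>t. L2norm M \<Omega> (u t)"])
  show "continuous_on {0..} (\<lambda>t. L2norm M \<Omega> (u t))"
    using \<Omega> sol by (rule strong_solution_L2norm_continuous)
  show "L2norm M \<Omega> (u 0) < lam * T"
    using strong_solution_L2norm_initial[OF \<Omega> sol \<open>u0 \<in> L2 M \<Omega>\<close>] assms(7) by simp
  show "L2norm M \<Omega> (u b) + \<mu> * b \<le> L2norm M \<Omega> (u a) + \<mu> * a"
    if "0 \<le> \<mu>" "\<mu> < lam" "0 < a" "a < b" "\<forall>t\<in>{a..b}. 0 < L2norm M \<Omega> (u t)" for \<mu> a b
    using strong_solution_L2norm_decay[OF \<Omega> sol F0 coercive that] .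
qed (use assms(6,8) L2norm_nonneg in auto)

section \<open>The functional TV0\<close>

lemma tv_open_zero: "tv_open \<nu> (\<lambda>x. 0) \<Omega> = 0"
proof -
  have "loc_lipschitz_on \<Omega> (\<lambda>x. 0::real)"
    unfolding loc_lipschitz_on_def by (intro ballI exI[of _ 1] conjI exI[of _ 0]) auto
  moreover have "upper_gradient_in \<Omega> (\<lambda>x. 0::real) (\<lambda>x. 0)"
    unfolding upper_gradient_in_def by simp
  moreover have "L1loc_conv \<nu> \<Omega> (\<lambda>i x. 0) (\<lambda>x. 0)"
    unfolding L1loc_conv_def by (intro ballI exI[of _ 1]) simp
  ultimately have "tv_open \<nu> (\<lambda>x. 0) \<Omega> \<le> liminf (\<lambda>i. \<integral>\<^sup>+ y. 0 * indicator \<Omega> y \<partial>\<nu>)"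
    unfolding tv_open_def by (intro INF_lower2[of "(\<lambda>i x. 0, \<lambda>i x. 0)"]) auto
  then show ?thesis
    by (simp add: Liminf_const)
qed

lemma doubling_radon_Int_ball_pos_finite:
  assumes dr: "doubling_radon \<nu>" and "open \<Omega>" "x \<in> closure \<Omega>" "0 < r"
  shows "0 < emeasure \<nu> (\<Omega> \<inter> ball x r)" "emeasure \<nu> (\<Omega> \<inter> ball x r) < \<infinity>"
proof -
  have sets: "sets \<nu> = sets borel"
    and balls: "\<And>y r. 0 < r \<Longrightarrow> 0 < emeasure \<nu> (ball y r) \<and> emeasure \<nu> (ball y r) < \<infinity>"
    using dr by (auto simp: doubling_radon_def)
  obtain y where "y \<in> \<Omega>" "dist y x < r"
    using assms(3,4) by (metis closure_approachable)
  then have "y \<in> \<Omega> \<inter> ball x r"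
    by (simp add: dist_commute)
  moreover have "open (\<Omega> \<inter> ball x r)"
    using \<open>open \<Omega>\<close> by auto
  ultimately obtain \<rho> where "0 < \<rho>" "ball y \<rho> \<subseteq> \<Omega> \<inter> ball x r"
    by (meson open_contains_ball)
  then have "0 < emeasure \<nu> (ball y \<rho>)" "emeasure \<nu> (ball y \<rho>) \<le> emeasure \<nu> (\<Omega> \<inter> ball x r)"
    using balls sets \<open>open \<Omega>\<close> by (auto intro!: emeasure_mono)
  then show "0 < emeasure \<nu> (\<Omega> \<inter> ball x r)"
    by order
  have "emeasure \<nu> (\<Omega> \<inter> ball x r) \<le> emeasure \<nu> (ball x r)"
    using sets by (intro emeasure_mono) auto
  also have "\<dots> < \<infinity>"
    using balls \<open>0 < r\<close> by blast
  finally show "emeasure \<nu> (\<Omega> \<inter> ball x r) < \<infinity>" .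
qed

lemma trace_pt_zero:
  assumes "doubling_radon \<nu>" "open \<Omega>" "x \<in> closure \<Omega>"
  shows "trace_pt \<nu> \<Omega> (\<lambda>x. 0) x = 0"
proof -
  define P where "P t \<longleftrightarrow> ((\<lambda>r. (\<integral>\<^sup>+ y. ennreal \<bar>0 - t\<bar> * indicator (\<Omega> \<inter> ball x r) y \<partial>\<nu>)
      / emeasure \<nu> (\<Omega> \<inter> ball x r)) \<longlongrightarrow> 0) (at_right 0)" for t :: real
  have "t = 0" if "P t" for t
  proof -
    have "(\<integral>\<^sup>+ y. ennreal \<bar>0 - t\<bar> * indicator (\<Omega> \<inter> ball x r) y \<partial>\<nu>) / emeasure \<nu> (\<Omega> \<inter> ball x r)
        = ennreal \<bar>t\<bar>" if "0 < r" for r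
    proof -
      have "\<Omega> \<inter> ball x r \<in> sets \<nu>"
        using assms(1,2) by (simp add: doubling_radon_def)
      then show ?thesis
        using doubling_radon_Int_ball_pos_finite[OF assms that]
        by (simp add: nn_integral_cmult_indicator ennreal_mult_divide_eq)
    qed
    then have "eventually (\<lambda>r. (\<integral>\<^sup>+ y. ennreal \<bar>0 - t\<bar> * indicator (\<Omega> \<inter> ball x r) y \<partial>\<nu>)
        / emeasure \<nu> (\<Omega> \<inter> ball x r) = ennreal \<bar>t\<bar>) (at_right 0)"
      by (simp add: eventually_at_filter)
    with \<open>P t\<close> have "((\<lambda>r. ennreal \<bar>t\<bar>) \<longlongrightarrow> 0) (at_right (0::real))"
      unfolding P_def by (simp add: tendsto_cong)
    then show "t = 0"
      by (simp add: tendsto_const_iff)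
  qed
  then show ?thesis
    unfolding trace_pt_def Let_def P_def[symmetric] by (metis someI_ex)
qed

lemma TV0_zero:
  assumes "doubling_radon \<nu>" "open \<Omega>"
  shows "TV0 \<nu> \<Omega> (\<lambda>x. 0) = 0"
proof -
  have "(\<integral>\<^sup>+ x. ennreal \<bar>trace_pt \<nu> \<Omega> (\<lambda>x. 0) x\<bar> * indicator (frontier \<Omega>) x \<partial>perimeter_measure \<nu> \<Omega>)
      = (\<integral>\<^sup>+ x. 0 \<partial>perimeter_measure \<nu> \<Omega>)"
    using trace_pt_zero[OF assms] by (intro nn_integral_cong) (simp add: frontier_def split: split_indicator)
  then show ?thesis
    unfolding TV0_def by (simp add: zero_in_L2 tv_open_zero set_integrable_def zero_ennreal.rep_eq)
qed

lemma TV0_nonneg: "0 \<le> TV0 \<nu> \<Omega> v"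
  unfolding TV0_def by simp

lemma lambda1_ge_if_Sobolev:
  assumes "0 < C" and Sobolev: "\<forall>v \<in> L2 \<nu> \<Omega>. ereal (L2norm \<nu> \<Omega> v) \<le> ereal C * TV0 \<nu> \<Omega> v"
  shows "ereal (1 / C) \<le> lambda1 \<nu> \<Omega>"
  unfolding lambda1_def
proof (rule INF_greatest)
  fix v
  assume v: "v \<in> {v \<in> L2 \<nu> \<Omega>. L2norm \<nu> \<Omega> v \<noteq> 0}"
  then have "0 < L2norm \<nu> \<Omega> v"
    using L2norm_nonneg[of \<nu> \<Omega> v] by simp
  moreover have "ereal (L2norm \<nu> \<Omega> v) \<le> ereal C * TV0 \<nu> \<Omega> v"
    using Sobolev v by blast
  ultimately show "ereal (1 / C) \<le> TV0 \<nu> \<Omega> v / ereal (L2norm \<nu> \<Omega> v)"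
    using \<open>0 < C\<close> by (cases "TV0 \<nu> \<Omega> v") (auto simp: field_simps)
qed

lemma TV0_ge_lambda1_mult_L2norm:
  assumes "ereal lam \<le> lambda1 \<nu> \<Omega>" "v \<in> L2 \<nu> \<Omega>"
  shows "ereal (lam * L2norm \<nu> \<Omega> v) \<le> TV0 \<nu> \<Omega> v"
proof (cases "L2norm \<nu> \<Omega> v = 0")
  case True
  then show ?thesis
    using TV0_nonneg[of \<nu> \<Omega> v] by (simp add: zero_ereal_def)
next
  case False
  then have "0 < L2norm \<nu> \<Omega> v"
    using L2norm_nonneg[of \<nu> \<Omega> v] by simp
  have "ereal lam \<le> TV0 \<nu> \<Omega> v / ereal (L2norm \<nu> \<Omega> v)"
    using assms False unfolding lambda1_def by (blast intro: INF_lower order_trans)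
  with \<open>0 < L2norm \<nu> \<Omega> v\<close> show ?thesis
    by (cases "TV0 \<nu> \<Omega> v") (auto simp: field_simps)
qed

theorem mainTheorem13:
  fixes \<nu> :: "'a::polish_space measure" and \<Omega> :: "'a set"
    and u0 :: "'a \<Rightarrow> real" and u :: "real \<Rightarrow> 'a \<Rightarrow> real"
  assumes "doubling_radon \<nu>"
    and "poincare_11_on \<nu> UNIV"
    and "regular_domain \<nu> \<Omega>"
    and "boundary_regular \<nu> \<Omega>"
    and "boundary_regular \<nu> (- closure \<Omega>)"
    and "\<exists>C>0. \<forall>v \<in> L2 \<nu> \<Omega>. ereal (L2norm \<nu> \<Omega> v) \<le> ereal C * TV0 \<nu> \<Omega> v"
    and "u0 \<in> L2 \<nu> \<Omega>"
    and "strong_solution \<nu> \<Omega> (TV0 \<nu> \<Omega>) u0 u"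
  shows "lambda1 \<nu> \<Omega> > 0 \<and>
         Inf (ereal ` {T. T > 0 \<and> (\<forall>t\<ge>T. L2norm \<nu> \<Omega> (u t) = 0)})
           \<le> ereal (L2norm \<nu> \<Omega> u0) / lambda1 \<nu> \<Omega>"
proof
  have "open \<Omega>"
    using assms(3) by (simp add: regular_domain_def)
  then have "\<Omega> \<in> sets \<nu>"
    using assms(1) by (simp add: doubling_radon_def)
  obtain C where "0 < C" "\<forall>v \<in> L2 \<nu> \<Omega>. ereal (L2norm \<nu> \<Omega> v) \<le> ereal C * TV0 \<nu> \<Omega> v"
    using assms(6) by blast
  then have "ereal (1 / C) \<le> lambda1 \<nu> \<Omega>"
    by (rule lambda1_ge_if_Sobolev)
  with \<open>0 < C\<close> show pos: "0 < lambda1 \<nu> \<Omega>"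
    by (metis less_le_trans ereal_less(2) divide_pos_pos zero_less_one)
  have "T \<in> {T. T > 0 \<and> (\<forall>t\<ge>T. L2norm \<nu> \<Omega> (u t) = 0)}"
    if "ereal lam \<le> lambda1 \<nu> \<Omega>" "0 < T" "L2norm \<nu> \<Omega> u0 < lam * T" for lam T
    using strong_solution_extinction[OF \<open>\<Omega> \<in> sets \<nu>\<close> assms(8,7) TV0_zero[OF assms(1) \<open>open \<Omega>\<close>]
        TV0_ge_lambda1_mult_L2norm[OF that(1)]] that(2,3)
    by auto
  then show "Inf (ereal ` {T. T > 0 \<and> (\<forall>t\<ge>T. L2norm \<nu> \<Omega> (u t) = 0)})
      \<le> ereal (L2norm \<nu> \<Omega> u0) / lambda1 \<nu> \<Omega>"
    using Inf_ereal_le_divide_if_decay_rate[OF pos L2norm_nonneg] by blast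
qed

end
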